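(* Let $U\subset\mathbb{C}$ be simply connected and let $F,G$ be holomorphic on $U$ with $F$ nowhere zero. Put $\phi=(F,\mathrm{i}F,-FG)$, and for $\theta\in\mathbb{R}$ let $$\mathbf{x}_\theta(z)=\cos\theta\,\mathrm{Re}\int_{z_0}^z\phi\,\mathrm{d}w+\sin\theta\,\mathrm{Im}\int_{z_0}^z\phi\,\mathrm{d}w=\mathrm{Re}\int_{z_0}^z\mathrm{e}^{-\mathrm{i}\theta}\phi\,\mathrm{d}w.$$ Then: (i) All $\mathbf{x}_\theta$ have the same first fundamental form $|F|^2|\mathrm{d}z|^2$. (ii) At a point $z$, the direction $\mathbf{v}=v_1\partial_u+v_2\partial_v$ is asymptotic for $\mathbf{x}_\theta$ if and only if $\mathrm{e}^{-\mathrm{i}\theta}F(z)G'(z)(v_1+\mathrm{i}v_2)^2\in\mathrm{i}\mathbb{R}$. (iii) At a point $z$ where $F(z)G'(z)\neq0$, the direction $\mathbf{v}$ is a principal direction of $\mathbf{x}_\theta$ if and only if $\mathrm{e}^{-\mathrm{i}\theta}F(z)G'(z)(v_1+\mathrm{i}v_2)^2\in\mathbb{R}$. (iv) Consequently, at such points, asymptotic directions of $\mathbf{x}_\theta$ are principal directions of the conjugate surface $\mathbf{x}_{\theta+\pi/2}$, and principal directions of $\mathbf{x}_\theta$ are asymptotic directions of $\mathbf{x}_{\theta+\pi/2}$.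
   Context: $\mathbb{I}^3$ is $\mathbb{R}^3$ with the degenerate metric $\langle a,b\rangle=a^1b^1+a^2b^2$, and $z=u+\mathrm{i}v$. The first fundamental form has coefficients $g_{ij}=\langle\mathbf{x}_i,\mathbf{x}_j\rangle$. The minimal normal $\mathbf{N}_m$ is the unique vector $(a,b,1)$ that is Euclidean-orthogonal to $\mathbf{x}_u,\mathbf{x}_v$, and the second fundamental form has coefficients $h_{ij}=\mathbf{x}_{ij}\cdot\mathbf{N}_m$. A direction $\mathbf{v}$ is asymptotic if $\mathrm{II}(\mathbf{v},\mathbf{v})=0$. It is principal if it is an eigenvector of the shape operator $g^{-1}h$, i.e. a critical direction of $\mathrm{II}(\mathbf{v},\mathbf{v})/\mathrm{I}(\mathbf{v},\mathbf{v})$. The surface $\mathbf{x}_{\theta+\pi/2}$ is called the conjugate of $\mathbf{x}_\theta$. *)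

theory Defs
  imports "HOL-Analysis.Analysis"
begin

text \<open>Surfaces in isotropic 3-space are maps X :: complex => real^3, parametrised by z = u + i v.\<close>

definition iso_ip :: "real^3 \<Rightarrow> real^3 \<Rightarrow> real" where
  "iso_ip a b = a$1 * b$1 + a$2 * b$2"

definition pu :: "(complex \<Rightarrow> real^3) \<Rightarrow> complex \<Rightarrow> real^3" where
  "pu X z = vector_derivative (\<lambda>t::real. X (z + of_real t)) (at 0)"

definition pv :: "(complex \<Rightarrow> real^3) \<Rightarrow> complex \<Rightarrow> real^3" where
  "pv X z = vector_derivative (\<lambda>t::real. X (z + \<i> * of_real t)) (at 0)"

definition gmat :: "(complex \<Rightarrow> real^3) \<Rightarrow> complex \<Rightarrow> real^2^2" where
  "gmat X z = vector [vector [iso_ip (pu X z) (pu X z), iso_ip (pu X z) (pv X z)],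
                      vector [iso_ip (pv X z) (pu X z), iso_ip (pv X z) (pv X z)]]"

definition min_normal :: "(complex \<Rightarrow> real^3) \<Rightarrow> complex \<Rightarrow> real^3" where
  "min_normal X z = (THE N. N$3 = 1 \<and> N \<bullet> pu X z = 0 \<and> N \<bullet> pv X z = 0)"

definition hmat :: "(complex \<Rightarrow> real^3) \<Rightarrow> complex \<Rightarrow> real^2^2" where
  "hmat X z = vector [vector [pu (pu X) z \<bullet> min_normal X z, pv (pu X) z \<bullet> min_normal X z],
                      vector [pu (pv X) z \<bullet> min_normal X z, pv (pv X) z \<bullet> min_normal X z]]"

definition shape_op :: "(complex \<Rightarrow> real^3) \<Rightarrow> complex \<Rightarrow> real^2^2" where
  "shape_op X z = matrix_inv (gmat X z) ** hmat X z"

definition second_ff :: "(complex \<Rightarrow> real^3) \<Rightarrow> complex \<Rightarrow> real^2 \<Rightarrow> real" where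
  "second_ff X z v = v \<bullet> (hmat X z *v v)"

definition asymptotic_dir :: "(complex \<Rightarrow> real^3) \<Rightarrow> complex \<Rightarrow> real^2 \<Rightarrow> bool" where
  "asymptotic_dir X z v \<longleftrightarrow> second_ff X z v = 0"

definition principal_dir :: "(complex \<Rightarrow> real^3) \<Rightarrow> complex \<Rightarrow> real^2 \<Rightarrow> bool" where
  "principal_dir X z v \<longleftrightarrow> v \<noteq> 0 \<and> (\<exists>c::real. shape_op X z *v v = c *\<^sub>R v)"

text \<open>x_theta(z) = Re(e^{-i theta} Phi(z)), with Phi = (P1,P2,P3) = integral of phi from z0.\<close>
definition surf :: "(complex \<Rightarrow> complex) \<Rightarrow> (complex \<Rightarrow> complex) \<Rightarrow> (complex \<Rightarrow> complex)
                     \<Rightarrow> real \<Rightarrow> complex \<Rightarrow> real^3" where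
  "surf P1 P2 P3 \<theta> z = vector [Re (exp (- \<i> * of_real \<theta>) * P1 z),
                                Re (exp (- \<i> * of_real \<theta>) * P2 z),
                                Re (exp (- \<i> * of_real \<theta>) * P3 z)]"

end

theory Submission
  imports Defs
begin

(*
  Each x_theta is the real part of the holomorphic curve e^(-i theta) Phi, so
  x_u = Re Phi_theta' and x_v = Re (i Phi_theta'), and likewise for the second
  derivatives. Writing w = e^(-i theta) F, this gives g = |w|^2 id = |F|^2 id, the
  minimal normal (Re G, Im G, 1), and a second fundamental form whose matrix is the
  trace-free symmetric matrix of A = e^(-i theta) F G', so II(v, v) = - Re (A (v1 + i v2)^2).
  As g is a multiple of the identity, the principal directions are the eigenvectors
  of that matrix, namely the v with A (v1 + i v2)^2 real. Passing from theta to
  theta + pi/2 multiplies A by -i and thereby exchanges the two conditions.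
*)

section \<open>Trace-free symmetric 2 x 2 matrices\<close>

definition sym_trace_free_matrix :: "complex \<Rightarrow> real^2^2" where
  "sym_trace_free_matrix A = vector [vector [- Re A, Im A], vector [Im A, Re A]]"

lemma matrix_vector_mult_2x2:
  "(vector [vector [a, b], vector [c, d]] :: real^2^2) *v v
     = vector [a * v$1 + b * v$2, c * v$1 + d * v$2]"
  by (simp add: vec_eq_iff forall_2 matrix_vector_mult_def sum_2)

lemma quadratic_form_sym_trace_free_matrix:
  "v \<bullet> (sym_trace_free_matrix A *v v) = - Re (A * (Complex (v$1) (v$2))\<^sup>2)"
  by (simp add: sym_trace_free_matrix_def matrix_vector_mult_2x2 inner_vec_def sum_2
      power2_eq_square algebra_simps)

lemma eigenvector_2x2_iff:
  fixes a b p q :: real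
  assumes "p \<noteq> 0 \<or> q \<noteq> 0"
  shows "(\<exists>\<mu>. - a * p + b * q = \<mu> * p \<and> b * p + a * q = \<mu> * q)
     \<longleftrightarrow> b * (p\<^sup>2 - q\<^sup>2) + 2 * a * p * q = 0"
proof
  assume "\<exists>\<mu>. - a * p + b * q = \<mu> * p \<and> b * p + a * q = \<mu> * q"
  then obtain \<mu> where e: "- a * p + b * q = \<mu> * p" "b * p + a * q = \<mu> * q" by blast
  have "b * (p\<^sup>2 - q\<^sup>2) + 2 * a * p * q = p * (b * p + a * q) - q * (- a * p + b * q)"
    by (simp add: algebra_simps power2_eq_square)
  then show "b * (p\<^sup>2 - q\<^sup>2) + 2 * a * p * q = 0"
    unfolding e by (simp add: algebra_simps)
next
  assume h: "b * (p\<^sup>2 - q\<^sup>2) + 2 * a * p * q = 0"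
  show "\<exists>\<mu>. - a * p + b * q = \<mu> * p \<and> b * p + a * q = \<mu> * q"
  proof (cases "p = 0")
    case True
    with assms h have "b = 0" by (simp add: power2_eq_square)
    with True show ?thesis by (intro exI[of _ a]) simp
  next
    case False
    from h have "(b * p + a * q) * p = (- a * p + b * q) * q"
      by (simp add: algebra_simps power2_eq_square)
    with False show ?thesis
      by (intro exI[of _ "(- a * p + b * q) / p"]) (simp add: field_simps)
  qed
qed

lemma eigenvector_sym_trace_free_matrix_iff:
  assumes "v \<noteq> 0"
  shows "(\<exists>c. sym_trace_free_matrix A *v v = c *\<^sub>R v) \<longleftrightarrow> A * (Complex (v$1) (v$2))\<^sup>2 \<in> \<real>"
proof -
  from assms have "v$1 \<noteq> 0 \<or> v$2 \<noteq> 0" by (auto simp: vec_eq_iff forall_2)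
  from eigenvector_2x2_iff[OF this, of "Re A" "Im A"]
  show ?thesis
    by (simp add: sym_trace_free_matrix_def matrix_vector_mult_2x2 vec_eq_iff forall_2
        complex_is_Real_iff power2_eq_square algebra_simps)
qed

lemma matrix_inv_eqI:
  fixes A B :: "'a::semiring_1^'n^'n"
  assumes "A ** B = mat 1" "B ** A = mat 1"
  shows "matrix_inv A = B"
proof -
  from assms have "\<exists>A'. A ** A' = mat 1 \<and> A' ** A = mat 1" by blast
  then have "matrix_inv A ** A = mat 1"
    unfolding matrix_inv_def by (rule someI2_ex) blast
  have "matrix_inv A = matrix_inv A ** (A ** B)" by (simp add: assms(1))
  also have "\<dots> = (matrix_inv A ** A) ** B" by (rule matrix_mul_assoc)
  also have "\<dots> = B" by (simp add: \<open>matrix_inv A ** A = mat 1\<close>)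
  finally show ?thesis .
qed

lemma matrix_inv_scaleR_mat_1:
  assumes "k \<noteq> 0"
  shows "matrix_inv (k *\<^sub>R mat 1 :: real^'n^'n) = inverse k *\<^sub>R mat 1"
  using assms by (intro matrix_inv_eqI) (simp_all flip: scalar_matrix_assoc add: matrix_scalar_ac)

lemma diagonal_2x2_eq_scaleR_mat_1:
  "(vector [vector [k, 0], vector [0, k]] :: real^2^2) = k *\<^sub>R mat 1"
  by (simp add: vec_eq_iff forall_2 mat_def)

text \<open>For conformal g the shape operator g^-1 h is a nonzero multiple of h.\<close>
lemma principal_dir_conformal_iff:
  assumes "gmat X z = vector [vector [k, 0], vector [0, k]]" "k \<noteq> 0"
    and "hmat X z = sym_trace_free_matrix A" "v \<noteq> 0"
  shows "principal_dir X z v \<longleftrightarrow> A * (Complex (v$1) (v$2))\<^sup>2 \<in> \<real>"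
proof -
  have "(\<exists>c. (inverse k *\<^sub>R sym_trace_free_matrix A) *v v = c *\<^sub>R v)
      \<longleftrightarrow> (\<exists>c. sym_trace_free_matrix A *v v = c *\<^sub>R v)"
  proof
    assume "\<exists>c. (inverse k *\<^sub>R sym_trace_free_matrix A) *v v = c *\<^sub>R v"
    then obtain c where "inverse k *\<^sub>R (sym_trace_free_matrix A *v v) = c *\<^sub>R v"
      by (auto simp: scaleR_matrix_vector_assoc)
    then have "k *\<^sub>R (inverse k *\<^sub>R (sym_trace_free_matrix A *v v)) = (k * c) *\<^sub>R v" by simp
    with \<open>k \<noteq> 0\<close> show "\<exists>c. sym_trace_free_matrix A *v v = c *\<^sub>R v" by auto
  next
    assume "\<exists>c. sym_trace_free_matrix A *v v = c *\<^sub>R v"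
    then obtain c where "sym_trace_free_matrix A *v v = c *\<^sub>R v" by blast
    then show "\<exists>c. (inverse k *\<^sub>R sym_trace_free_matrix A) *v v = c *\<^sub>R v"
      by (intro exI[of _ "inverse k * c"]) (simp flip: scaleR_matrix_vector_assoc)
  qed
  with assms show ?thesis
    by (simp add: principal_dir_def shape_op_def diagonal_2x2_eq_scaleR_mat_1
        matrix_inv_scaleR_mat_1 eigenvector_sym_trace_free_matrix_iff
        flip: scalar_matrix_assoc)
qed

section \<open>Partial derivatives of the real part of a holomorphic curve\<close>

definition Re_curve ::
    "(complex \<Rightarrow> complex) \<Rightarrow> (complex \<Rightarrow> complex) \<Rightarrow> (complex \<Rightarrow> complex) \<Rightarrow> complex \<Rightarrow> real^3" where
  "Re_curve Q1 Q2 Q3 y = vector [Re (Q1 y), Re (Q2 y), Re (Q3 y)]"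

lemma vector_3_eq_axis:
  "(vector [a, b, c] :: real^3) = a *\<^sub>R axis 1 1 + b *\<^sub>R axis 2 1 + c *\<^sub>R axis 3 1"
  by (simp add: vec_eq_iff forall_3 axis_def)

lemma has_vector_derivative_vector_3:
  assumes "(f1 has_vector_derivative d1) (at t)" "(f2 has_vector_derivative d2) (at t)"
    "(f3 has_vector_derivative d3) (at t)"
  shows "((\<lambda>t. vector [f1 t, f2 t, f3 t] :: real^3) has_vector_derivative vector [d1, d2, d3]) (at t)"
  unfolding vector_3_eq_axis using assms
  by (intro derivative_eq_intros) (auto simp: has_real_derivative_iff_has_vector_derivative)

lemma has_vector_derivative_Re_along_line:
  assumes "(Q has_field_derivative d) (at z)"
  shows "((\<lambda>t::real. Re (Q (z + of_real t * w))) has_vector_derivative Re (w * d)) (at 0)"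
proof -
  have "((\<lambda>t::real. z + of_real t * w) has_vector_derivative w) (at 0)"
    by (auto intro!: derivative_eq_intros simp: scaleR_conv_of_real)
  then have "((Q \<circ> (\<lambda>t::real. z + of_real t * w)) has_vector_derivative w * d) (at 0)"
    by (rule field_vector_diff_chain_at) (simp add: assms)
  from bounded_linear.has_vector_derivative[OF bounded_linear_Re this]
  show ?thesis by (simp add: o_def)
qed

lemma directional_derivative_Re_curve:
  assumes "(Q1 has_field_derivative d1) (at z)" "(Q2 has_field_derivative d2) (at z)"
    "(Q3 has_field_derivative d3) (at z)"
  shows "vector_derivative (\<lambda>t::real. Re_curve Q1 Q2 Q3 (z + of_real t * w)) (at 0)
     = vector [Re (w * d1), Re (w * d2), Re (w * d3)]"
  unfolding Re_curve_def
  by (intro vector_derivative_at has_vector_derivative_vector_3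
      has_vector_derivative_Re_along_line assms)

lemma pu_Re_curve:
  assumes "(Q1 has_field_derivative d1) (at z)" "(Q2 has_field_derivative d2) (at z)"
    "(Q3 has_field_derivative d3) (at z)"
  shows "pu (Re_curve Q1 Q2 Q3) z = vector [Re d1, Re d2, Re d3]"
  using directional_derivative_Re_curve[OF assms, of 1] by (simp add: pu_def)

lemma pv_Re_curve:
  assumes "(Q1 has_field_derivative d1) (at z)" "(Q2 has_field_derivative d2) (at z)"
    "(Q3 has_field_derivative d3) (at z)"
  shows "pv (Re_curve Q1 Q2 Q3) z = vector [Re (\<i> * d1), Re (\<i> * d2), Re (\<i> * d3)]"
  using directional_derivative_Re_curve[OF assms, of \<i>] by (simp add: pv_def mult.commute)

lemma vector_derivative_along_line_cong_open:
  fixes X Y :: "complex \<Rightarrow> 'b::real_normed_vector"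
  assumes "open U" "z \<in> U" "\<And>y. y \<in> U \<Longrightarrow> X y = Y y"
  shows "vector_derivative (\<lambda>t::real. X (z + of_real t * w)) (at 0)
       = vector_derivative (\<lambda>t::real. Y (z + of_real t * w)) (at 0)"
proof -
  have "((\<lambda>t::real. z + of_real t * w) \<longlongrightarrow> z) (nhds 0)"
    by (auto intro!: tendsto_eq_intros simp: filterlim_ident)
  from topological_tendstoD[OF this assms(1,2)]
  have "eventually (\<lambda>t. z + of_real t * w \<in> U) (nhds (0::real))" .
  then have "eventually (\<lambda>t. X (z + of_real t * w) = Y (z + of_real t * w)) (nhds (0::real))"
    by (rule eventually_mono) (use assms(3) in auto)
  then show ?thesis
    by (intro vector_derivative_cong_eq) auto
qed

lemma pu_cong_open: "open U \<Longrightarrow> z \<in> U \<Longrightarrow> (\<And>y. y \<in> U \<Longrightarrow> X y = Y y) \<Longrightarrow> pu X z = pu Y z"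
  using vector_derivative_along_line_cong_open[of U z X Y 1] by (simp add: pu_def)

lemma pv_cong_open: "open U \<Longrightarrow> z \<in> U \<Longrightarrow> (\<And>y. y \<in> U \<Longrightarrow> X y = Y y) \<Longrightarrow> pv X z = pv Y z"
  using vector_derivative_along_line_cong_open[of U z X Y \<i>] by (simp add: pv_def mult.commute)

lemma second_partials_Re_curve:
  assumes "open U" "z \<in> U"
    and "\<forall>y\<in>U. (Q1 has_field_derivative q1 y) (at y)"
    and "\<forall>y\<in>U. (Q2 has_field_derivative q2 y) (at y)"
    and "\<forall>y\<in>U. (Q3 has_field_derivative q3 y) (at y)"
    and "(q1 has_field_derivative r1) (at z)" "(q2 has_field_derivative r2) (at z)"
    and "(q3 has_field_derivative r3) (at z)"
  shows "pu (pu (Re_curve Q1 Q2 Q3)) z = vector [Re r1, Re r2, Re r3]"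
    and "pv (pu (Re_curve Q1 Q2 Q3)) z = vector [Re (\<i> * r1), Re (\<i> * r2), Re (\<i> * r3)]"
    and "pu (pv (Re_curve Q1 Q2 Q3)) z = vector [Re (\<i> * r1), Re (\<i> * r2), Re (\<i> * r3)]"
    and "pv (pv (Re_curve Q1 Q2 Q3)) z = vector [- Re r1, - Re r2, - Re r3]"
proof -
  have pu: "pu (Re_curve Q1 Q2 Q3) y = Re_curve q1 q2 q3 y" if "y \<in> U" for y
    using pu_Re_curve[OF assms(3-5)[rule_format, OF that]] by (simp add: Re_curve_def)
  have pv: "pv (Re_curve Q1 Q2 Q3) y = Re_curve (\<lambda>y. \<i> * q1 y) (\<lambda>y. \<i> * q2 y) (\<lambda>y. \<i> * q3 y) y"
    if "y \<in> U" for y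
    using pv_Re_curve[OF assms(3-5)[rule_format, OF that]] by (simp add: Re_curve_def)
  have i_r: "((\<lambda>y. \<i> * q1 y) has_field_derivative \<i> * r1) (at z)"
    "((\<lambda>y. \<i> * q2 y) has_field_derivative \<i> * r2) (at z)"
    "((\<lambda>y. \<i> * q3 y) has_field_derivative \<i> * r3) (at z)"
    using assms(6-8) by (auto intro: DERIV_cmult)
  show "pu (pu (Re_curve Q1 Q2 Q3)) z = vector [Re r1, Re r2, Re r3]"
    using pu_cong_open[OF assms(1,2) pu] pu_Re_curve[OF assms(6-8)] by simp
  show "pv (pu (Re_curve Q1 Q2 Q3)) z = vector [Re (\<i> * r1), Re (\<i> * r2), Re (\<i> * r3)]"
    using pv_cong_open[OF assms(1,2) pu] pv_Re_curve[OF assms(6-8)] by simp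
  show "pu (pv (Re_curve Q1 Q2 Q3)) z = vector [Re (\<i> * r1), Re (\<i> * r2), Re (\<i> * r3)]"
    using pu_cong_open[OF assms(1,2) pv] pu_Re_curve[OF i_r] by simp
  show "pv (pv (Re_curve Q1 Q2 Q3)) z = vector [- Re r1, - Re r2, - Re r3]"
    using pv_cong_open[OF assms(1,2) pv] pv_Re_curve[OF i_r] by simp
qed

section \<open>Fundamental forms of surfaces with tangent vectors Re (w, i w, - w g)\<close>

lemma min_normal_eqI:
  assumes "w \<noteq> 0"
    and "pu X z = vector [Re w, Re (\<i> * w), Re (- (w * g))]"
    and "pv X z = vector [Re (\<i> * w), - Re w, Re (- (\<i> * w * g))]"
  shows "min_normal X z = vector [Re g, Im g, 1]"
  unfolding min_normal_def
proof (rule the_equality)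
  show "(vector [Re g, Im g, 1] :: real^3) $ 3 = 1 \<and> vector [Re g, Im g, 1] \<bullet> pu X z = 0
      \<and> vector [Re g, Im g, 1] \<bullet> pv X z = 0"
    unfolding assms(2,3) by (simp add: inner_vec_def sum_3 algebra_simps)
next
  fix N :: "real^3"
  assume "N $ 3 = 1 \<and> N \<bullet> pu X z = 0 \<and> N \<bullet> pv X z = 0"
  then have N3: "N$3 = 1" and
    e1: "(N$1 - Re g) * Re w - (N$2 - Im g) * Im w = 0" and
    e2: "(N$1 - Re g) * Im w + (N$2 - Im g) * Re w = 0"
    unfolding assms(2,3) by (auto simp: inner_vec_def sum_3 algebra_simps)
  have "(N$1 - Re g) * ((Re w)\<^sup>2 + (Im w)\<^sup>2) = Re w * ((N$1 - Re g) * Re w - (N$2 - Im g) * Im w)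
      + Im w * ((N$1 - Re g) * Im w + (N$2 - Im g) * Re w)"
    "(N$2 - Im g) * ((Re w)\<^sup>2 + (Im w)\<^sup>2) = - Im w * ((N$1 - Re g) * Re w - (N$2 - Im g) * Im w)
      + Re w * ((N$1 - Re g) * Im w + (N$2 - Im g) * Re w)"
    by (simp_all add: algebra_simps power2_eq_square)
  moreover have "(Re w)\<^sup>2 + (Im w)\<^sup>2 \<noteq> 0"
    using \<open>w \<noteq> 0\<close> by (simp add: complex_eq_0)
  ultimately have "N$1 = Re g" "N$2 = Im g"
    unfolding e1 e2 by auto
  with N3 show "N = vector [Re g, Im g, 1]"
    by (simp add: vec_eq_iff forall_3)
qed

lemma gmat_eqI:
  assumes "pu X z = vector [Re w, Re (\<i> * w), a]"
    and "pv X z = vector [Re (\<i> * w), - Re w, b]"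
  shows "gmat X z = vector [vector [(cmod w)\<^sup>2, 0], vector [0, (cmod w)\<^sup>2]]"
  unfolding cmod_power2 by (simp add: gmat_def assms iso_ip_def power2_eq_square add.commute)

lemma exp_minus_i_shift_pi_half:
  "exp (- \<i> * of_real (\<theta> + pi/2)) = - \<i> * exp (- \<i> * of_real \<theta>)"
proof -
  have exp_cis: "exp (- \<i> * of_real t) = cis (- t)" for t
    by (simp add: cis_conv_exp)
  have "cis (- (\<theta> + pi/2)) = cis (- \<theta>) * cis (- (pi/2))"
    by (simp only: minus_add_distrib cis_mult)
  also have "\<dots> = - \<i> * cis (- \<theta>)" by simp
  finally show ?thesis unfolding exp_cis .
qed

lemma Re_eq_0_iff_minus_i_mult_Reals: "Re x = 0 \<longleftrightarrow> - \<i> * x \<in> \<real>"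
  by (simp add: complex_is_Real_iff)

lemma Reals_iff_Re_minus_i_mult_eq_0: "x \<in> \<real> \<longleftrightarrow> Re (- \<i> * x) = 0"
  by (simp add: complex_is_Real_iff)

section \<open>The associated family\<close>

locale weierstrass_data =
  fixes U :: "complex set" and F G P1 P2 P3 :: "complex \<Rightarrow> complex"
  assumes open_U: "open U"
    and F_holomorphic: "F holomorphic_on U" and G_holomorphic: "G holomorphic_on U"
    and F_nonzero: "\<And>z. z \<in> U \<Longrightarrow> F z \<noteq> 0"
    and P1_deriv: "\<And>z. z \<in> U \<Longrightarrow> (P1 has_field_derivative F z) (at z)"
    and P2_deriv: "\<And>z. z \<in> U \<Longrightarrow> (P2 has_field_derivative \<i> * F z) (at z)"
    and P3_deriv: "\<And>z. z \<in> U \<Longrightarrow> (P3 has_field_derivative - (F z * G z)) (at z)"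
begin

lemma surf_eq_Re_curve:
  fixes \<theta> :: real
  defines "c \<equiv> exp (- \<i> * of_real \<theta>)"
  shows "surf P1 P2 P3 \<theta> = Re_curve (\<lambda>y. c * P1 y) (\<lambda>y. c * P2 y) (\<lambda>y. c * P3 y)"
  by (simp add: c_def surf_def Re_curve_def fun_eq_iff)

lemma surf_derivs:
  fixes \<theta> :: real
  defines "c \<equiv> exp (- \<i> * of_real \<theta>)"
  shows "\<forall>y\<in>U. ((\<lambda>y. c * P1 y) has_field_derivative c * F y) (at y)"
    and "\<forall>y\<in>U. ((\<lambda>y. c * P2 y) has_field_derivative \<i> * (c * F y)) (at y)"
    and "\<forall>y\<in>U. ((\<lambda>y. c * P3 y) has_field_derivative - (c * F y * G y)) (at y)"
  using DERIV_cmult[OF P1_deriv, of _ c] DERIV_cmult[OF P2_deriv, of _ c]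
    DERIV_cmult[OF P3_deriv, of _ c]
  by (simp_all add: algebra_simps)

lemma surf_partials:
  fixes \<theta> :: real
  defines "c \<equiv> exp (- \<i> * of_real \<theta>)"
  assumes "z \<in> U"
  shows "pu (surf P1 P2 P3 \<theta>) z = vector [Re (c * F z), Re (\<i> * (c * F z)), Re (- (c * F z * G z))]"
    and "pv (surf P1 P2 P3 \<theta>) z = vector [Re (\<i> * (c * F z)), - Re (c * F z), Re (- (\<i> * (c * F z) * G z))]"
  unfolding surf_eq_Re_curve c_def
  using pu_Re_curve[OF surf_derivs[rule_format, OF assms(2)]]
    pv_Re_curve[OF surf_derivs[rule_format, OF assms(2)]]
  by (simp_all add: algebra_simps)

lemma gmat_surf:
  assumes "z \<in> U"
  shows "gmat (surf P1 P2 P3 \<theta>) z = vector [vector [(cmod (F z))\<^sup>2, 0], vector [0, (cmod (F z))\<^sup>2]]"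
  using gmat_eqI[OF surf_partials[OF assms]] by (simp add: norm_mult norm_exp_eq_Re)

lemma min_normal_surf:
  assumes "z \<in> U"
  shows "min_normal (surf P1 P2 P3 \<theta>) z = vector [Re (G z), Im (G z), 1]"
  by (rule min_normal_eqI[OF _ surf_partials[OF assms]]) (simp add: F_nonzero assms)

lemma hmat_surf:
  assumes "z \<in> U"
  shows "hmat (surf P1 P2 P3 \<theta>) z = sym_trace_free_matrix (exp (- \<i> * of_real \<theta>) * F z * deriv G z)"
proof -
  define c where "c = exp (- \<i> * of_real \<theta>)"
  have "(F has_field_derivative deriv F z) (at z)" "(G has_field_derivative deriv G z) (at z)"
    using F_holomorphic G_holomorphic open_U assms by (auto intro: holomorphic_derivI)
  then have r_derivs: "((\<lambda>y. c * F y) has_field_derivative c * deriv F z) (at z)"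
    "((\<lambda>y. \<i> * (c * F y)) has_field_derivative \<i> * (c * deriv F z)) (at z)"
    "((\<lambda>y. - (c * F y * G y)) has_field_derivative
        - (c * deriv F z * G z + c * F z * deriv G z)) (at z)"
    by (auto intro!: derivative_eq_intros simp: algebra_simps)
  note second = second_partials_Re_curve[OF open_U assms surf_derivs[of \<theta>, folded c_def] r_derivs]
  show ?thesis
    unfolding hmat_def min_normal_surf[OF assms] sym_trace_free_matrix_def c_def[symmetric]
    unfolding surf_eq_Re_curve[of \<theta>, folded c_def] second
    by (simp add: vec_eq_iff forall_2 inner_vec_def sum_3 algebra_simps)
qed

lemma asymptotic_dir_surf_iff:
  assumes "z \<in> U"
  shows "asymptotic_dir (surf P1 P2 P3 \<theta>) z v
     \<longleftrightarrow> Re (exp (- \<i> * of_real \<theta>) * F z * deriv G z * (Complex (v$1) (v$2))\<^sup>2) = 0"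
  unfolding asymptotic_dir_def second_ff_def hmat_surf[OF assms] quadratic_form_sym_trace_free_matrix
  by (simp only: neg_equal_0_iff_equal)

lemma principal_dir_surf_iff:
  assumes "z \<in> U" "v \<noteq> 0"
  shows "principal_dir (surf P1 P2 P3 \<theta>) z v
     \<longleftrightarrow> exp (- \<i> * of_real \<theta>) * F z * deriv G z * (Complex (v$1) (v$2))\<^sup>2 \<in> \<real>"
  by (rule principal_dir_conformal_iff[OF gmat_surf[OF assms(1)] _ hmat_surf[OF assms(1)] assms(2)])
    (simp add: F_nonzero assms(1))

lemma asymptotic_dir_iff_principal_dir_conjugate:
  assumes "z \<in> U" "v \<noteq> 0"
  shows "asymptotic_dir (surf P1 P2 P3 \<theta>) z v \<longleftrightarrow> principal_dir (surf P1 P2 P3 (\<theta> + pi/2)) z v"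
  unfolding asymptotic_dir_surf_iff[OF assms(1)] principal_dir_surf_iff[OF assms]
    exp_minus_i_shift_pi_half
  by (simp only: mult.assoc Re_eq_0_iff_minus_i_mult_Reals)

lemma principal_dir_iff_asymptotic_dir_conjugate:
  assumes "z \<in> U" "v \<noteq> 0"
  shows "principal_dir (surf P1 P2 P3 \<theta>) z v \<longleftrightarrow> asymptotic_dir (surf P1 P2 P3 (\<theta> + pi/2)) z v"
  unfolding asymptotic_dir_surf_iff[OF assms(1)] principal_dir_surf_iff[OF assms]
    exp_minus_i_shift_pi_half
  by (simp only: mult.assoc Reals_iff_Re_minus_i_mult_eq_0)

end

theorem mainTheorem9:
  fixes U :: "complex set" and F G P1 P2 P3 :: "complex \<Rightarrow> complex" and z0 :: complex
  assumes "open U" and "simply_connected U"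
    and "F holomorphic_on U" and "G holomorphic_on U"
    and "\<forall>z\<in>U. F z \<noteq> 0"
    and "z0 \<in> U"
    and "\<forall>z\<in>U. (P1 has_field_derivative F z) (at z)"
    and "\<forall>z\<in>U. (P2 has_field_derivative \<i> * F z) (at z)"
    and "\<forall>z\<in>U. (P3 has_field_derivative - (F z * G z)) (at z)"
    and "P1 z0 = 0" and "P2 z0 = 0" and "P3 z0 = 0"
  shows
    "(\<forall>\<theta> z. z \<in> U \<longrightarrow>
        gmat (surf P1 P2 P3 \<theta>) z = vector [vector [(cmod (F z))\<^sup>2, 0], vector [0, (cmod (F z))\<^sup>2]])
   \<and> (\<forall>\<theta> z (v::real^2). z \<in> U \<and> v \<noteq> 0 \<longrightarrow>
        (asymptotic_dir (surf P1 P2 P3 \<theta>) z v \<longleftrightarrow>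
         Re (exp (- \<i> * of_real \<theta>) * F z * deriv G z * (Complex (v$1) (v$2))\<^sup>2) = 0))
   \<and> (\<forall>\<theta> z (v::real^2). z \<in> U \<and> F z * deriv G z \<noteq> 0 \<and> v \<noteq> 0 \<longrightarrow>
        (principal_dir (surf P1 P2 P3 \<theta>) z v \<longleftrightarrow>
         exp (- \<i> * of_real \<theta>) * F z * deriv G z * (Complex (v$1) (v$2))\<^sup>2 \<in> \<real>))
   \<and> (\<forall>\<theta> z (v::real^2). z \<in> U \<and> F z * deriv G z \<noteq> 0 \<and> v \<noteq> 0 \<longrightarrow>
        (asymptotic_dir (surf P1 P2 P3 \<theta>) z v \<longrightarrow> principal_dir (surf P1 P2 P3 (\<theta> + pi/2)) z v)
      \<and> (principal_dir (surf P1 P2 P3 \<theta>) z v \<longrightarrow> asymptotic_dir (surf P1 P2 P3 (\<theta> + pi/2)) z v))"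
proof -
  \<comment> \<open>Only the derivatives of the primitives matter: simple connectivity and the base
      point merely guarantee that P1, P2, P3 exist. Nor is F G' \<noteq> 0 needed: where
      F G' = 0 the second fundamental form vanishes and every direction is both
      principal and asymptotic.\<close>
  interpret weierstrass_data U F G P1 P2 P3
    using assms by unfold_locales auto
  show ?thesis
    using gmat_surf asymptotic_dir_surf_iff principal_dir_surf_iff
      asymptotic_dir_iff_principal_dir_conjugate principal_dir_iff_asymptotic_dir_conjugate
    by blast
qed

end
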